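(* Let $(a_{i,j})_{i,j\in\mathbb{N}}$ and $(b_{i,j})_{i,j\in\mathbb{N}}$ be arbitrary real numbers, and let $(T(n,k))_{n\ge 0,\,k\in\mathbb{Z}}$ be defined by $T(0,0)=1$, $T(n,k)=0$ whenever $k<0$ or $k>n$, and \[ T(n,k)=a_{n,k}\,T(n-1,k)+b_{n,k}\,T(n-1,k-1)\qquad (n\ge 1). \] Then for all integers $0\le k\le n$, \[ T(n,k)=\sum_{\sigma\in\mathcal{C}^\uparrow(k,n)}\ \prod_{i=1}^{n-k} a_{\tilde\sigma_i,\ \tilde\sigma_i-i}\ \prod_{i=1}^{k} b_{\sigma(i),\ i}. \]
   Context: $[n]=\{1,\dots,n\}$. $\mathcal{C}^\uparrow(k,n)$ is the set of strictly increasing functions $\sigma:[k]\to[n]$. For $\sigma\in\mathcal{C}^\uparrow(k,n)$, $(\tilde\sigma_1<\tilde\sigma_2<\cdots<\tilde\sigma_{n-k})$ denotes the increasing list of the elements of $[n]\setminus\sigma([k])$. Empty products equal $1$. *)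

theory Defs
  imports Complex_Main "HOL-Library.FuncSet"
begin

definition incr_maps :: "nat \<Rightarrow> nat \<Rightarrow> (nat \<Rightarrow> nat) set" where
  "incr_maps k n = {\<sigma> \<in> {1..k} \<rightarrow>\<^sub>E {1..n}.
      \<forall>i\<in>{1..k}. \<forall>j\<in>{1..k}. i < j \<longrightarrow> \<sigma> i < \<sigma> j}"

definition compl_elem :: "nat \<Rightarrow> nat \<Rightarrow> (nat \<Rightarrow> nat) \<Rightarrow> nat \<Rightarrow> nat" where
  "compl_elem k n \<sigma> i = sorted_list_of_set ({1..n} - \<sigma> ` {1..k}) ! (i - 1)"

end

theory Submission
  imports Defs
begin

(* Both sides satisfy the recurrence of T in n, so induction on n suffices. Split the increasing
  maps \<sigma> : [k] \<rightarrow> [n] according to whether n lies in their image. If it does not, \<sigma> is an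
  increasing map into [n-1], and n is appended to its complement as the last, (n-k)-th, element,
  contributing the factor a(n,k). If it does, then \<sigma>(k) = n, the restriction of \<sigma> to [k-1] is an
  arbitrary increasing map into [n-1] with the same complement, and the new factor is b(n,k). *)

lemma incr_maps_iff:
  "\<sigma> \<in> incr_maps k n \<longleftrightarrow> \<sigma> \<in> {1..k} \<rightarrow>\<^sub>E {1..n} \<and> strict_mono_on {1..k} \<sigma>"
  by (auto simp: incr_maps_def strict_mono_on_def)

lemma finite_incr_maps: "finite (incr_maps k n)"
  by (rule finite_subset[OF _ finite_PiE[of "{1..k}" "\<lambda>_. {1..n}"]]) (auto simp: incr_maps_def)

lemma incr_maps_0: "incr_maps 0 n = {\<lambda>_. undefined}"
  by (auto simp: incr_maps_def)

lemma incr_maps_image_subset: "\<sigma> \<in> incr_maps k n \<Longrightarrow> \<sigma> ` {1..k} \<subseteq> {1..n}"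
  by (auto simp: incr_maps_def)

lemma card_image_incr_maps: "\<sigma> \<in> incr_maps k n \<Longrightarrow> card (\<sigma> ` {1..k}) = k"
  by (simp add: incr_maps_iff card_image strict_mono_on_imp_inj_on)

lemma incr_maps_eq_empty:
  assumes "n < k"
  shows "incr_maps k n = {}"
proof (rule equals0I)
  fix \<sigma> assume \<sigma>: "\<sigma> \<in> incr_maps k n"
  have "k = card (\<sigma> ` {1..k})"
    using card_image_incr_maps[OF \<sigma>] by simp
  also have "\<dots> \<le> card {1..n}"
    by (rule card_mono[OF finite_atLeastAtMost incr_maps_image_subset[OF \<sigma>]])
  finally show False
    using assms by simp
qed

lemma PiE_insert_avoiding:
  assumes "x \<notin> B"
  shows "{f \<in> A \<rightarrow>\<^sub>E insert x B. x \<notin> f ` A} = A \<rightarrow>\<^sub>E B"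
  using assms by (auto simp: PiE_iff extensional_def)

lemma incr_maps_avoiding_last:
  "{\<sigma> \<in> incr_maps k (Suc m). Suc m \<notin> \<sigma> ` {1..k}} = incr_maps k m"
proof -
  have "{1..Suc m} = insert (Suc m) {1..m}"
    by auto
  then have "{\<sigma> \<in> {1..k} \<rightarrow>\<^sub>E {1..Suc m}. Suc m \<notin> \<sigma> ` {1..k}} = {1..k} \<rightarrow>\<^sub>E {1..m}"
    using PiE_insert_avoiding[of "Suc m" "{1..m}" "{1..k}"] by simp
  then show ?thesis
    unfolding incr_maps_def by blast
qed

lemma incr_maps_last_eq:
  assumes "\<sigma> \<in> incr_maps (Suc j) n" and "n \<in> \<sigma> ` {1..Suc j}"
  shows "\<sigma> (Suc j) = n"
proof -
  obtain i where i: "i \<in> {1..Suc j}" "\<sigma> i = n"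
    using assms(2) by blast
  have "\<sigma> i \<le> \<sigma> (Suc j)"
    using strict_mono_on_leD[of "{1..Suc j}" \<sigma> i "Suc j"] assms(1) i by (simp add: incr_maps_iff)
  moreover have "\<sigma> (Suc j) \<le> n"
    using incr_maps_image_subset[OF assms(1)] by (auto simp: image_subset_iff)
  ultimately show ?thesis
    using i by simp
qed

lemma fun_upd_undefined_in_incr_maps:
  assumes \<sigma>: "\<sigma> \<in> incr_maps (Suc j) (Suc m)" and last: "\<sigma> (Suc j) = Suc m"
  shows "\<sigma>(Suc j := undefined) \<in> incr_maps j m"
  unfolding incr_maps_iff
proof
  have mono: "strict_mono_on {1..Suc j} \<sigma>" and range: "\<sigma> \<in> {1..Suc j} \<rightarrow>\<^sub>E {1..Suc m}"
    using \<sigma> by (auto simp: incr_maps_iff)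
  have "\<sigma>(Suc j := undefined) \<in> {1..j} \<rightarrow>\<^sub>E {1..Suc m}"
    by (rule fun_upd_in_PiE) (use range in \<open>auto simp: atLeastAtMostSuc_conv\<close>)
  moreover have "\<sigma> l \<le> m" if "l \<in> {1..j}" for l
    using strict_mono_onD[OF mono, of l "Suc j"] that last by auto
  ultimately show "\<sigma>(Suc j := undefined) \<in> {1..j} \<rightarrow>\<^sub>E {1..m}"
    by (auto simp: PiE_iff)
  show "strict_mono_on {1..j} (\<sigma>(Suc j := undefined))"
    using mono by (auto simp: strict_mono_on_def)
qed

lemma fun_upd_in_incr_maps:
  assumes \<tau>: "\<tau> \<in> incr_maps j m" and "m < v"
  shows "\<tau>(Suc j := v) \<in> incr_maps (Suc j) v"
  unfolding incr_maps_iff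
proof
  have range: "\<tau> \<in> {1..j} \<rightarrow>\<^sub>E {1..m}" and mono: "strict_mono_on {1..j} \<tau>"
    using \<tau> by (auto simp: incr_maps_iff)
  have interval: "{1..Suc j} = insert (Suc j) {1..j}"
    by auto
  show "\<tau>(Suc j := v) \<in> {1..Suc j} \<rightarrow>\<^sub>E {1..v}"
    unfolding interval
    by (intro PiE_fun_upd) (use range \<open>m < v\<close> in \<open>auto simp: PiE_iff\<close>)
  show "strict_mono_on {1..Suc j} (\<tau>(Suc j := v))"
  proof (rule strict_mono_onI)
    fix r s assume "r \<in> {1..Suc j}" "s \<in> {1..Suc j}" "r < s"
    then have r: "r \<in> {1..j}" and s: "s = Suc j \<or> s \<in> {1..j}"
      by auto
    then show "(\<tau>(Suc j := v)) r < (\<tau>(Suc j := v)) s"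
      using PiE_mem[OF range r] strict_mono_onD[OF mono r _ \<open>r < s\<close>] \<open>m < v\<close> by auto
  qed
qed

lemma incr_maps_hitting_last:
  "{\<sigma> \<in> incr_maps (Suc j) (Suc m). Suc m \<in> \<sigma> ` {1..Suc j}}
     = (\<lambda>\<tau>. \<tau>(Suc j := Suc m)) ` incr_maps j m"
proof (intro equalityI subsetI)
  fix \<sigma> assume "\<sigma> \<in> {\<sigma> \<in> incr_maps (Suc j) (Suc m). Suc m \<in> \<sigma> ` {1..Suc j}}"
  then have \<sigma>: "\<sigma> \<in> incr_maps (Suc j) (Suc m)" and last: "\<sigma> (Suc j) = Suc m"
    using incr_maps_last_eq by auto
  then have "\<sigma> = (\<sigma>(Suc j := undefined))(Suc j := Suc m)"
    by (simp add: fun_upd_idem)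
  then show "\<sigma> \<in> (\<lambda>\<tau>. \<tau>(Suc j := Suc m)) ` incr_maps j m"
    using fun_upd_undefined_in_incr_maps[OF \<sigma> last] by blast
next
  fix \<sigma> assume "\<sigma> \<in> (\<lambda>\<tau>. \<tau>(Suc j := Suc m)) ` incr_maps j m"
  then obtain \<tau> where \<tau>: "\<tau> \<in> incr_maps j m" and \<sigma>: "\<sigma> = \<tau>(Suc j := Suc m)"
    by blast
  then show "\<sigma> \<in> {\<sigma> \<in> incr_maps (Suc j) (Suc m). Suc m \<in> \<sigma> ` {1..Suc j}}"
    using fun_upd_in_incr_maps[OF \<tau>, of "Suc m"] by auto
qed

lemma inj_on_fun_upd_incr_maps: "inj_on (\<lambda>\<tau>. \<tau>(Suc j := v)) (incr_maps j m)"
proof (rule inj_onI)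
  fix \<tau> \<tau>' assume "\<tau> \<in> incr_maps j m" "\<tau>' \<in> incr_maps j m" and eq: "\<tau>(Suc j := v) = \<tau>'(Suc j := v)"
  then have "\<tau> (Suc j) = undefined" "\<tau>' (Suc j) = undefined"
    by (auto simp: incr_maps_def PiE_def extensional_def)
  then show "\<tau> = \<tau>'"
    using eq by (metis fun_upd_triv fun_upd_upd)
qed

definition compl_list :: "nat \<Rightarrow> nat \<Rightarrow> (nat \<Rightarrow> nat) \<Rightarrow> nat list" where
  "compl_list k n \<sigma> = sorted_list_of_set ({1..n} - \<sigma> ` {1..k})"

lemma length_compl_list: "\<sigma> \<in> incr_maps k n \<Longrightarrow> length (compl_list k n \<sigma>) = n - k"
  using incr_maps_image_subset card_image_incr_maps
  by (simp add: compl_list_def card_Diff_subset)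

lemma compl_list_Suc:
  assumes "\<sigma> \<in> incr_maps k m"
  shows "compl_list k (Suc m) \<sigma> = compl_list k m \<sigma> @ [Suc m]"
proof -
  have "{1..Suc m} - \<sigma> ` {1..k} = insert (Suc m) ({1..m} - \<sigma> ` {1..k})"
    using incr_maps_image_subset[OF assms] by auto
  then show ?thesis
    by (simp add: compl_list_def sorted_list_of_set_insert sorted_insort_is_snoc)
qed

lemma compl_list_fun_upd:
  assumes "\<tau> \<in> incr_maps j m"
  shows "compl_list (Suc j) (Suc m) (\<tau>(Suc j := Suc m)) = compl_list j m \<tau>"
proof -
  have "\<tau>(Suc j := Suc m) ` {1..Suc j} = insert (Suc m) (\<tau> ` {1..j})"
    by (auto simp: atLeastAtMostSuc_conv)
  then have "{1..Suc m} - \<tau>(Suc j := Suc m) ` {1..Suc j} = {1..m} - \<tau> ` {1..j}"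
    using incr_maps_image_subset[OF assms] by auto
  then show ?thesis
    by (simp add: compl_list_def)
qed

(* The 0-based position i of the list is the paper's index i + 1. *)
definition compl_weight :: "(nat \<Rightarrow> nat \<Rightarrow> 'a::comm_monoid_mult) \<Rightarrow> nat list \<Rightarrow> 'a" where
  "compl_weight a xs = (\<Prod>i<length xs. a (xs ! i) (xs ! i - Suc i))"

lemma compl_weight_snoc: "compl_weight a (xs @ [x]) = compl_weight a xs * a x (x - Suc (length xs))"
proof -
  have "(\<Prod>i<length xs. a ((xs @ [x]) ! i) ((xs @ [x]) ! i - Suc i)) = compl_weight a xs"
    unfolding compl_weight_def by (rule prod.cong) (simp_all add: nth_append)
  then show ?thesis
    by (simp add: compl_weight_def)
qed

lemma prod_compl_elem_eq_compl_weight: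
  assumes "\<sigma> \<in> incr_maps k n"
  shows "(\<Prod>i=1..n-k. a (compl_elem k n \<sigma> i) (compl_elem k n \<sigma> i - i)) = compl_weight a (compl_list k n \<sigma>)"
  unfolding compl_weight_def length_compl_list[OF assms] compl_elem_def compl_list_def[symmetric]
  by (simp add: prod.atLeast1_atMost_eq)

definition incr_weight ::
    "(nat \<Rightarrow> nat \<Rightarrow> 'a::comm_monoid_mult) \<Rightarrow> (nat \<Rightarrow> nat \<Rightarrow> 'a) \<Rightarrow> nat \<Rightarrow> nat \<Rightarrow> (nat \<Rightarrow> nat) \<Rightarrow> 'a" where
  "incr_weight a b k n \<sigma> = compl_weight a (compl_list k n \<sigma>) * (\<Prod>i=1..k. b (\<sigma> i) i)"

definition incr_weight_sum ::
    "(nat \<Rightarrow> nat \<Rightarrow> 'a::comm_semiring_1) \<Rightarrow> (nat \<Rightarrow> nat \<Rightarrow> 'a) \<Rightarrow> nat \<Rightarrow> nat \<Rightarrow> 'a" where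
  "incr_weight_sum a b k n = (\<Sum>\<sigma>\<in>incr_maps k n. incr_weight a b k n \<sigma>)"

lemma incr_weight_Suc:
  assumes "\<sigma> \<in> incr_maps k m" and "k \<le> m"
  shows "incr_weight a b k (Suc m) \<sigma> = a (Suc m) k * incr_weight a b k m \<sigma>"
  using assms by (simp add: incr_weight_def compl_list_Suc compl_weight_snoc length_compl_list ac_simps)

lemma incr_weight_fun_upd:
  assumes "\<tau> \<in> incr_maps j m"
  shows "incr_weight a b (Suc j) (Suc m) (\<tau>(Suc j := Suc m)) = b (Suc m) (Suc j) * incr_weight a b j m \<tau>"
proof -
  have "(\<Prod>i=1..j. b ((\<tau>(Suc j := Suc m)) i) i) = (\<Prod>i=1..j. b (\<tau> i) i)"
    by (rule prod.cong) auto
  then show ?thesis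
    by (simp add: incr_weight_def compl_list_fun_upd[OF assms] ac_simps)
qed

lemma incr_weight_sum_avoiding_last:
  "(\<Sum>\<sigma>\<in>{\<sigma> \<in> incr_maps k (Suc m). Suc m \<notin> \<sigma> ` {1..k}}. incr_weight a b k (Suc m) \<sigma>)
     = a (Suc m) k * incr_weight_sum a b k m"
proof (cases "k \<le> m")
  case True
  then show ?thesis
    unfolding incr_maps_avoiding_last incr_weight_sum_def
    by (simp add: sum_distrib_left incr_weight_Suc)
next
  case False
  then show ?thesis
    unfolding incr_maps_avoiding_last incr_weight_sum_def
    by (simp add: incr_maps_eq_empty)
qed

lemma incr_weight_sum_hitting_last:
  "(\<Sum>\<sigma>\<in>{\<sigma> \<in> incr_maps (Suc j) (Suc m). Suc m \<in> \<sigma> ` {1..Suc j}}. incr_weight a b (Suc j) (Suc m) \<sigma>)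
     = b (Suc m) (Suc j) * incr_weight_sum a b j m"
  unfolding incr_maps_hitting_last incr_weight_sum_def sum_distrib_left
    sum.reindex[OF inj_on_fun_upd_incr_maps] comp_def
  by (rule sum.cong[OF refl]) (rule incr_weight_fun_upd)

lemma incr_weight_sum_Suc:
  "incr_weight_sum a b k (Suc m) = a (Suc m) k * incr_weight_sum a b k m
     + (case k of 0 \<Rightarrow> 0 | Suc j \<Rightarrow> b (Suc m) k * incr_weight_sum a b j m)"
proof -
  let ?w = "incr_weight a b k (Suc m)"
  let ?avoid = "{\<sigma> \<in> incr_maps k (Suc m). Suc m \<notin> \<sigma> ` {1..k}}"
  let ?hit = "{\<sigma> \<in> incr_maps k (Suc m). Suc m \<in> \<sigma> ` {1..k}}"
  have "incr_weight_sum a b k (Suc m) = sum ?w (?avoid \<union> ?hit)"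
    unfolding incr_weight_sum_def by (rule arg_cong[where f = "sum ?w"]) blast
  also have "\<dots> = sum ?w ?avoid + sum ?w ?hit"
    by (rule sum.union_disjoint) (auto intro: finite_subset[OF _ finite_incr_maps])
  finally have split: "incr_weight_sum a b k (Suc m) = sum ?w ?avoid + sum ?w ?hit" .
  show ?thesis
  proof (cases k)
    case 0
    then show ?thesis
      using split unfolding incr_weight_sum_avoiding_last by simp
  next
    case (Suc j)
    then show ?thesis
      using split unfolding Suc incr_weight_sum_avoiding_last incr_weight_sum_hitting_last by simp
  qed
qed

lemma incr_weight_sum_solves_recurrence:
  fixes a b :: "nat \<Rightarrow> nat \<Rightarrow> 'a::comm_semiring_1" and T :: "nat \<Rightarrow> int \<Rightarrow> 'a"
  assumes T00: "T 0 0 = 1"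
    and T_out: "\<And>n k. k < 0 \<or> k > int n \<Longrightarrow> T n k = 0"
    and T_rec: "\<And>n k. n \<ge> 1 \<Longrightarrow> 0 \<le> k \<Longrightarrow> k \<le> int n \<Longrightarrow>
        T n k = a n (nat k) * T (n - 1) k + b n (nat k) * T (n - 1) (k - 1)"
  shows "T n (int k) = incr_weight_sum a b k n"
proof (induction n arbitrary: k)
  case 0
  show ?case
    by (cases k) (simp_all add: T00 T_out incr_weight_sum_def incr_maps_0 incr_weight_def
        compl_list_def compl_weight_def incr_maps_eq_empty)
next
  case (Suc m)
  show ?case
  proof (cases "k \<le> Suc m")
    case True
    then have "T (Suc m) (int k) = a (Suc m) k * T m (int k) + b (Suc m) k * T m (int k - 1)"
      using T_rec[of "Suc m" "int k"] by simp
    moreover have "T m (int k - 1) = (case k of 0 \<Rightarrow> 0 | Suc j \<Rightarrow> incr_weight_sum a b j m)"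
      using T_out Suc.IH by (cases k) auto
    ultimately show ?thesis
      using Suc.IH[of k] by (cases k) (simp_all add: incr_weight_sum_Suc)
  next
    case False
    then show ?thesis
      by (simp add: T_out incr_weight_sum_def incr_maps_eq_empty)
  qed
qed

theorem mainTheorem1:
  fixes a b :: "nat \<Rightarrow> nat \<Rightarrow> real"
    and T :: "nat \<Rightarrow> int \<Rightarrow> real"
  assumes T00: "T 0 0 = 1"
    and T_out: "\<And>n k. k < 0 \<or> k > int n \<Longrightarrow> T n k = 0"
    and T_rec: "\<And>n k. n \<ge> 1 \<Longrightarrow> 0 \<le> k \<Longrightarrow> k \<le> int n \<Longrightarrow>
        T n k = a n (nat k) * T (n - 1) k + b n (nat k) * T (n - 1) (k - 1)"
  shows "\<forall>n k::nat. k \<le> n \<longrightarrow>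
     T n (int k) = (\<Sum>\<sigma>\<in>incr_maps k n.
        (\<Prod>i=1..n-k. a (compl_elem k n \<sigma> i) (compl_elem k n \<sigma> i - i)) *
        (\<Prod>i=1..k. b (\<sigma> i) i))"
proof -
  have "(\<Sum>\<sigma>\<in>incr_maps k n.
        (\<Prod>i=1..n-k. a (compl_elem k n \<sigma> i) (compl_elem k n \<sigma> i - i)) * (\<Prod>i=1..k. b (\<sigma> i) i))
      = incr_weight_sum a b k n" for k n
    unfolding incr_weight_sum_def incr_weight_def
    by (rule sum.cong) (simp_all only: prod_compl_elem_eq_compl_weight)
  then show ?thesis
    using incr_weight_sum_solves_recurrence[OF assms] by simp
qed

end
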